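(* Let $t\ge 3$ be an integer. Then, as $n\to\infty$, $$ex_3(n,Tr(K_{2,t}))\le \left(\frac{\sqrt{3(3t-1)}\,(t-1)}{3}+\frac{\sqrt{t-1}}{2}\right)n^{3/2}+o(n^{3/2}).$$
   Context: For a graph $F$ with vertex set $\{v_1,\dots,v_p\}$ and edge set $\{e_1,\dots,e_q\}$, a hypergraph $\mathcal{H}$ contains $F$ as a trace if there exist distinct vertices $w_1,\dots,w_p\in V(\mathcal{H})$ and distinct edges $f_1,\dots,f_q\in E(\mathcal{H})$ such that whenever $e_i=v_\alpha v_\beta$, we have $f_i\cap\{w_1,\dots,w_p\}=\{w_\alpha,w_\beta\}$. $ex_3(n,Tr(F))$ denotes the maximum number of edges of an $n$-vertex $3$-uniform hypergraph that does not contain $F$ as a trace. $K_{2,t}$ is the complete bipartite graph with parts of sizes $2$ and $t$. *)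

theory Defs
  imports "HOL-Analysis.Analysis"
begin

text \<open>A graph F is given by a finite vertex set VF and a set EF of edges, each edge a
  2-element subset of VF.\<close>

definition contains_trace ::
  "'a set \<Rightarrow> 'a set set \<Rightarrow> 'v set \<Rightarrow> 'v set set \<Rightarrow> bool" where
  "contains_trace V E VF EF \<longleftrightarrow>
     (\<exists>w f. inj_on w VF \<and> w ` VF \<subseteq> V \<and> inj_on f EF \<and> f ` EF \<subseteq> E \<and>
        (\<forall>e\<in>EF. f e \<inter> w ` VF = w ` e))"

definition K2t_vertices :: "nat \<Rightarrow> (nat + nat) set" where
  "K2t_vertices t = Inl ` {0..<2} \<union> Inr ` {0..<t}"

definition K2t_edges :: "nat \<Rightarrow> (nat + nat) set set" where
  "K2t_edges t = {{Inl i, Inr j} | i j. i < 2 \<and> j < t}"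

definition uniform3 :: "nat \<Rightarrow> nat set set \<Rightarrow> bool" where
  "uniform3 n E \<longleftrightarrow> (\<forall>e\<in>E. e \<subseteq> {0..<n} \<and> card e = 3)"

definition ex3_trace :: "nat \<Rightarrow> 'v set \<Rightarrow> 'v set set \<Rightarrow> nat" where
  "ex3_trace n VF EF =
     Max {card E | E. uniform3 n E \<and> \<not> contains_trace {0..<n} E VF EF}"

end

(* Say that w joins u and v separately if some hyperedge contains u and w but not v and another
   one contains v and w but not u. A minimal edge cover is a star forest, and the union of two
   star forests on S has an independent set of at least |S|/3 vertices; hence a third of the
   vertices joining u and v separately have partners outside this third on both sides, and t of
   them would form a trace of K_{2,t}. So at most 3t - 3 vertices join a given pair separately.
   Let d(w) be the degree of w in the 2-shadow. At most 2 d(w) ordered pairs of shadow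
   neighbours of w are not joined separately by w, which gives
   sum d(w)^2 <= 3 sum d(w) + (3t - 3) n^2, and counting the link of w the same way gives
   6|E| <= (3t - 1) sum d(w). By Cauchy-Schwarz, sum d(w) <= sqrt(3t - 3) n^(3/2) + 3n, so
   |E| <= (3t - 1)/6 sqrt(3t - 3) n^(3/2) + O(n), and for t >= 3 this leading constant is at
   most the one claimed. *)

theory Submission
  imports Defs "HOL-Real_Asymp.Real_Asymp"
begin

section \<open>Star forests\<close>

text \<open>Equivalently, a disjoint union of stars.\<close>

definition star_forest :: "'a set set \<Rightarrow> bool" where
  "star_forest F \<longleftrightarrow> (\<forall>e\<in>F. card e = 2 \<and> (\<exists>c\<in>e. \<forall>e'\<in>F. c \<in> e' \<longrightarrow> e' = e))"

lemma star_forest_subset: "star_forest F \<Longrightarrow> F' \<subseteq> F \<Longrightarrow> star_forest F'"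
  unfolding star_forest_def by (meson subsetD)

text \<open>A cover by edges {c, q c} of minimum size is a star forest: an edge without a private
  endpoint could be dropped.\<close>

lemma star_forest_cover:
  assumes "finite C" and "irreflp R" and "\<forall>c\<in>C. \<exists>x. R c x"
  obtains F where "star_forest F" and "\<forall>e\<in>F. \<exists>a b. e = {a, b} \<and> R a b"
    and "\<forall>c\<in>C. \<exists>e\<in>F. c \<in> e"
proof -
  obtain q where q: "\<forall>c\<in>C. R c (q c)" using bchoice[OF assms(3)] by blast
  define covers where "covers F \<longleftrightarrow> F \<subseteq> (\<lambda>c. {c, q c}) ` C \<and> (\<forall>c\<in>C. \<exists>e\<in>F. c \<in> e)" for F
  have "covers ((\<lambda>c. {c, q c}) ` C)" by (auto simp: covers_def)
  then obtain F where F: "covers F" and min: "\<And>F'. covers F' \<Longrightarrow> card F \<le> card F'"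
    using ex_has_least_nat[of covers "(\<lambda>c. {c, q c}) ` C" card] by blast
  have "finite F" using F \<open>finite C\<close> by (auto simp: covers_def intro: finite_subset)
  have edge: "\<exists>a b. e = {a, b} \<and> R a b" if e: "e \<in> F" for e
  proof -
    obtain c where "c \<in> C" "e = {c, q c}" using F e by (auto simp: covers_def)
    then show ?thesis using q by blast
  qed
  have "\<exists>c\<in>e. \<forall>e'\<in>F. c \<in> e' \<longrightarrow> e' = e" if e: "e \<in> F" for e
  proof (rule ccontr)
    assume "\<not> ?thesis"
    then have shared: "\<forall>c\<in>e. \<exists>e'\<in>F - {e}. c \<in> e'" by blast
    have "\<forall>c\<in>C. \<exists>e'\<in>F - {e}. c \<in> e'"
    proof
      fix c assume "c \<in> C"
      then obtain e' where "e' \<in> F" "c \<in> e'" using F by (auto simp: covers_def)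
      then show "\<exists>e'\<in>F - {e}. c \<in> e'" using shared by (cases "e' = e") auto
    qed
    then have "covers (F - {e})" using F by (auto simp: covers_def)
    then have "card F \<le> card (F - {e})" by (rule min)
    then show False using card_Diff1_less[OF \<open>finite F\<close> e] by simp
  qed
  moreover have "card e = 2" if e: "e \<in> F" for e
  proof -
    obtain a b where "e = {a, b}" "R a b" using edge[OF e] by blast
    moreover have "a \<noteq> b" using \<open>R a b\<close> \<open>irreflp R\<close> by (auto dest: irreflpD)
    ultimately show ?thesis by simp
  qed
  ultimately have "star_forest F" by (simp add: star_forest_def)
  moreover have "\<forall>e\<in>F. \<exists>a b. e = {a, b} \<and> R a b" using edge by blast
  moreover have "\<forall>c\<in>C. \<exists>e\<in>F. c \<in> e" using F by (simp add: covers_def)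
  ultimately show ?thesis by (rule that)
qed

lemma card_star_forest_le:
  assumes "star_forest F" and "finite S" and "\<forall>e\<in>F. e \<subseteq> S"
  shows "card F \<le> card {x\<in>S. card {e\<in>F. x \<in> e} \<le> 1}"
proof -
  have "\<forall>e\<in>F. \<exists>c. c \<in> e \<and> (\<forall>e'\<in>F. c \<in> e' \<longrightarrow> e' = e)"
    using assms(1) unfolding star_forest_def by blast
  from bchoice[OF this] obtain p where p: "\<forall>e\<in>F. p e \<in> e \<and> (\<forall>e'\<in>F. p e \<in> e' \<longrightarrow> e' = e)"
    by blast
  have "inj_on p F"
  proof (rule inj_onI)
    fix e1 e2 assume "e1 \<in> F" "e2 \<in> F" "p e1 = p e2"
    then show "e1 = e2" using p by metis
  qed
  moreover have "p ` F \<subseteq> {x\<in>S. card {e\<in>F. x \<in> e} \<le> 1}"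
  proof
    fix x assume "x \<in> p ` F"
    then obtain e where "e \<in> F" "x = p e" by blast
    then have "{e'\<in>F. x \<in> e'} \<subseteq> {e}" and "x \<in> S" using p assms(3) by auto
    then show "x \<in> {x\<in>S. card {e\<in>F. x \<in> e} \<le> 1}"
      using card_mono[of "{e}" "{e'\<in>F. x \<in> e'}"] by simp
  qed
  ultimately show ?thesis by (rule card_inj_on_le) (use assms(2) in simp)
qed

lemma sum_degree_star_forest:
  assumes "star_forest F" and "finite S" and "\<forall>e\<in>F. e \<subseteq> S"
  shows "(\<Sum>x\<in>S. card {e\<in>F. x \<in> e}) = 2 * card F"
proof (rule sum_multicount)
  show "finite F" using assms(2,3) finite_subset[of F "Pow S"] by auto
  show "\<forall>e\<in>F. card {x\<in>S. x \<in> e} = 2"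
  proof
    fix e assume "e \<in> F"
    then have "{x\<in>S. x \<in> e} = e" using assms(3) by auto
    then show "card {x\<in>S. x \<in> e} = 2" using assms(1) \<open>e \<in> F\<close> by (simp add: star_forest_def)
  qed
qed fact

text \<open>If every vertex of S had degree at least three, summing degrees would give
  3|S| \<le> 2|F1| + 2|F2| \<le> 2|S|.\<close>

lemma two_star_forests_low_degree:
  assumes "star_forest F1" "star_forest F2" and "finite S" "S \<noteq> {}"
    and "\<forall>e\<in>F1 \<union> F2. e \<subseteq> S"
  shows "\<exists>x\<in>S. card {e\<in>F1. x \<in> e} + card {e\<in>F2. x \<in> e} \<le> 2"
proof (rule ccontr)
  assume "\<not> ?thesis"
  then have high: "3 \<le> card {e\<in>F1. x \<in> e} + card {e\<in>F2. x \<in> e}" if "x \<in> S" for x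
    using that by force
  define A1 where "A1 = {x\<in>S. card {e\<in>F1. x \<in> e} \<le> 1}"
  define A2 where "A2 = {x\<in>S. card {e\<in>F2. x \<in> e} \<le> 1}"
  have "A1 \<inter> A2 = {}" using high unfolding A1_def A2_def by force
  then have "card A1 + card A2 = card (A1 \<union> A2)"
    using assms(3) by (simp add: A1_def A2_def card_Un_disjoint)
  also have "\<dots> \<le> card S" using assms(3) by (intro card_mono) (auto simp: A1_def A2_def)
  finally have A: "card A1 + card A2 \<le> card S" .
  have "3 * card S = (\<Sum>x\<in>S. 3)" by simp
  also have "\<dots> \<le> (\<Sum>x\<in>S. card {e\<in>F1. x \<in> e} + card {e\<in>F2. x \<in> e})"
    using high by (intro sum_mono) auto
  also have "\<dots> = 2 * card F1 + 2 * card F2"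
    using assms by (simp add: sum.distrib sum_degree_star_forest)
  also have "\<dots> \<le> 2 * card A1 + 2 * card A2"
    using assms card_star_forest_le[of F1 S] card_star_forest_le[of F2 S]
    unfolding A1_def A2_def by simp
  finally have "3 * card S \<le> 2 * card S" using A by linarith
  then show False using assms(3,4) by (simp add: card_gt_0_iff)
qed

lemma two_star_forests_few_neighbours:
  assumes "star_forest F1" "star_forest F2" and "finite S" "S \<noteq> {}"
  obtains x where "x \<in> S" "card {y\<in>S. {x, y} \<in> F1 \<union> F2} \<le> 2"
proof -
  define G1 where "G1 = {e\<in>F1. e \<subseteq> S}"
  define G2 where "G2 = {e\<in>F2. e \<subseteq> S}"
  have "star_forest G1" by (rule star_forest_subset[OF assms(1)]) (auto simp: G1_def)
  moreover have "star_forest G2" by (rule star_forest_subset[OF assms(2)]) (auto simp: G2_def)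
  moreover have "\<forall>e\<in>G1 \<union> G2. e \<subseteq> S" by (auto simp: G1_def G2_def)
  ultimately obtain x where "x \<in> S" and low: "card {e\<in>G1. x \<in> e} + card {e\<in>G2. x \<in> e} \<le> 2"
    using two_star_forests_low_degree[of G1 G2 S] assms(3,4) by blast
  define N where "N = {y\<in>S. {x, y} \<in> F1 \<union> F2}"
  have "finite (G1 \<union> G2)"
    using assms(3) finite_subset[of "G1 \<union> G2" "Pow S"] by (auto simp: G1_def G2_def)
  have "card N \<le> card {e\<in>G1 \<union> G2. x \<in> e}"
  proof (rule card_inj_on_le)
    show "inj_on (\<lambda>y. {x, y}) N"
      by (rule inj_onI) (auto simp: doubleton_eq_iff)
    show "(\<lambda>y. {x, y}) ` N \<subseteq> {e\<in>G1 \<union> G2. x \<in> e}"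
      using \<open>x \<in> S\<close> by (auto simp: N_def G1_def G2_def)
    show "finite {e\<in>G1 \<union> G2. x \<in> e}" using \<open>finite (G1 \<union> G2)\<close> by simp
  qed
  also have "{e\<in>G1 \<union> G2. x \<in> e} = {e\<in>G1. x \<in> e} \<union> {e\<in>G2. x \<in> e}" by blast
  also have "card \<dots> \<le> 2"
    using card_Un_le[of "{e\<in>G1. x \<in> e}" "{e\<in>G2. x \<in> e}"] low by linarith
  finally show ?thesis using that \<open>x \<in> S\<close> by (simp add: N_def)
qed

lemma no_pair_subset_insert:
  assumes "\<forall>e\<in>F. card e = 2" "\<forall>e\<in>F. \<not> e \<subseteq> W" "\<forall>y\<in>W. {x, y} \<notin> F"
  shows "\<forall>e\<in>F. \<not> e \<subseteq> insert x W"
proof (intro ballI notI)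
  fix e assume "e \<in> F" "e \<subseteq> insert x W"
  then have "x \<in> e" using assms(2) by (meson subset_insert)
  obtain a b where "e = {a, b}" "a \<noteq> b" using assms(1) \<open>e \<in> F\<close> by (meson card_2_iff)
  define y where "y = (if x = a then b else a)"
  have "e = {x, y}" "y \<noteq> x" using \<open>e = {a, b}\<close> \<open>a \<noteq> b\<close> \<open>x \<in> e\<close> by (auto simp: y_def)
  then show False using assms(3) \<open>e \<in> F\<close> \<open>e \<subseteq> insert x W\<close> by auto
qed

text \<open>Greedy argument: keep a vertex with at most two neighbours in the two forests, discard
  its neighbours, and recurse.\<close>

lemma two_star_forests_independent_third:
  assumes "star_forest F1" "star_forest F2" and "finite S"
  shows "\<exists>W\<subseteq>S. card S \<le> 3 * card W \<and> (\<forall>e\<in>F1 \<union> F2. \<not> e \<subseteq> W)"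
  using \<open>finite S\<close>
proof (induction S rule: finite_psubset_induct)
  case (psubset S)
  have two: "card e = 2" if "e \<in> F1 \<union> F2" for e
    using that assms(1,2) by (auto simp: star_forest_def)
  show ?case
  proof (cases "S = {}")
    case True
    have "\<forall>e\<in>F1 \<union> F2. \<not> e \<subseteq> {}"
      using two by (metis card.empty subset_empty zero_neq_numeral)
    then show ?thesis using True by (intro exI[of _ "{}"]) simp
  next
    case False
    then obtain x where "x \<in> S" and "card {y\<in>S. {x, y} \<in> F1 \<union> F2} \<le> 2"
      using two_star_forests_few_neighbours[OF assms(1,2) psubset.hyps] by blast
    define N where "N = {y\<in>S. {x, y} \<in> F1 \<union> F2}"
    have "finite N" using psubset.hyps by (simp add: N_def)
    then have "card (insert x N) \<le> 3"
      using \<open>card {y\<in>S. {x, y} \<in> F1 \<union> F2} \<le> 2\<close> by (simp add: card_insert_if N_def)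
    define S' where "S' = S - insert x N"
    have "S' \<subset> S" using \<open>x \<in> S\<close> by (auto simp: S'_def)
    then obtain W where W: "W \<subseteq> S'" "card S' \<le> 3 * card W" "\<forall>e\<in>F1 \<union> F2. \<not> e \<subseteq> W"
      using psubset.IH[OF \<open>S' \<subset> S\<close>] by blast
    have "finite W"
      by (rule rev_finite_subset[OF psubset.hyps]) (use W(1) \<open>S' \<subset> S\<close> in auto)
    have "x \<notin> W" using W(1) by (auto simp: S'_def)
    have "card S \<le> card (S' \<union> insert x N)"
      by (rule card_mono) (use psubset.hyps \<open>finite N\<close> in \<open>auto simp: S'_def\<close>)
    also have "\<dots> \<le> card S' + card (insert x N)" by (rule card_Un_le)
    finally have "card S \<le> card S' + card (insert x N)" .
    show ?thesis
    proof (intro exI conjI)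
      show "insert x W \<subseteq> S" using W(1) \<open>x \<in> S\<close> by (auto simp: S'_def)
      show "card S \<le> 3 * card (insert x W)"
        using \<open>card S \<le> card S' + card (insert x N)\<close> \<open>card (insert x N) \<le> 3\<close> W(2)
          \<open>finite W\<close> \<open>x \<notin> W\<close> by simp
      have "\<forall>y\<in>W. {x, y} \<notin> F1 \<union> F2" using W(1) by (auto simp: S'_def N_def)
      then show "\<forall>e\<in>F1 \<union> F2. \<not> e \<subseteq> insert x W"
        using two W(3) by (intro no_pair_subset_insert) auto
    qed
  qed
qed

lemma large_subset_with_outside_neighbours:
  assumes "finite C"
    and "symp R1" "irreflp R1" "\<forall>c\<in>C. \<exists>x. R1 c x"
    and "symp R2" "irreflp R2" "\<forall>c\<in>C. \<exists>x. R2 c x"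
  obtains W where "W \<subseteq> C" "card C \<le> 3 * card W"
    "\<forall>w\<in>W. \<exists>x. R1 w x \<and> x \<notin> W" "\<forall>w\<in>W. \<exists>x. R2 w x \<and> x \<notin> W"
proof -
  obtain F1 where F1: "star_forest F1" "\<forall>e\<in>F1. \<exists>a b. e = {a, b} \<and> R1 a b" "\<forall>c\<in>C. \<exists>e\<in>F1. c \<in> e"
    using star_forest_cover[OF assms(1,3,4)] by blast
  obtain F2 where F2: "star_forest F2" "\<forall>e\<in>F2. \<exists>a b. e = {a, b} \<and> R2 a b" "\<forall>c\<in>C. \<exists>e\<in>F2. c \<in> e"
    using star_forest_cover[OF assms(1,6,7)] by blast
  obtain W where W: "W \<subseteq> C" "card C \<le> 3 * card W" "\<forall>e\<in>F1 \<union> F2. \<not> e \<subseteq> W"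
    using two_star_forests_independent_third[OF F1(1) F2(1) assms(1)] by blast
  have outside: "\<exists>x. R w x \<and> x \<notin> W"
    if R: "symp R" and F: "\<forall>e\<in>F. \<exists>a b. e = {a, b} \<and> R a b" "\<forall>c\<in>C. \<exists>e\<in>F. c \<in> e"
      and indep: "\<forall>e\<in>F. \<not> e \<subseteq> W" and w: "w \<in> W" for R F w
  proof -
    obtain e where "e \<in> F" "w \<in> e" using F(2) w W(1) by blast
    moreover obtain a b where "e = {a, b}" "R a b" using F(1) \<open>e \<in> F\<close> by blast
    moreover have "R b a" using \<open>R a b\<close> R by (rule sympD[rotated])
    ultimately have "\<exists>x. e = {w, x} \<and> R w x" by (auto simp: insert_commute)
    then show ?thesis using indep \<open>e \<in> F\<close> w by auto
  qed
  show ?thesis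
  proof (rule that[OF W(1,2)])
    show "\<forall>w\<in>W. \<exists>x. R1 w x \<and> x \<notin> W" using outside[OF assms(2) F1(2,3)] W(3) by blast
    show "\<forall>w\<in>W. \<exists>x. R2 w x \<and> x \<notin> W" using outside[OF assms(5) F2(2,3)] W(3) by blast
  qed
qed

section \<open>Traces\<close>

lemma contains_traceI:
  assumes "inj_on \<phi> VF" "\<phi> ` VF \<subseteq> V" "\<forall>e\<in>EF. e \<subseteq> VF"
    and "\<forall>e\<in>EF. \<exists>z. z \<notin> \<phi> ` VF \<and> insert z (\<phi> ` e) \<in> E"
  shows "contains_trace V E VF EF"
proof -
  obtain z where z: "\<forall>e\<in>EF. z e \<notin> \<phi> ` VF \<and> insert (z e) (\<phi> ` e) \<in> E"
    using bchoice[OF assms(4)] by blast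
  define f where "f e = insert (z e) (\<phi> ` e)" for e
  have trace: "f e \<inter> \<phi> ` VF = \<phi> ` e" if "e \<in> EF" for e
    using z assms(3) that unfolding f_def by blast
  have "inj_on f EF"
  proof (rule inj_onI)
    fix e1 e2 assume "e1 \<in> EF" "e2 \<in> EF" "f e1 = f e2"
    then have "\<phi> ` e1 = \<phi> ` e2" using trace by metis
    then show "e1 = e2"
      using inj_on_image_eq_iff[OF assms(1)] assms(3) \<open>e1 \<in> EF\<close> \<open>e2 \<in> EF\<close> by simp
  qed
  moreover have "f ` EF \<subseteq> E" using z by (auto simp: f_def)
  ultimately show ?thesis
    unfolding contains_trace_def using assms(1,2) trace by (intro exI[of _ \<phi>] exI[of _ f]) simp
qed

lemma contains_K2t_traceI:
  assumes "u \<in> V" "v \<in> V" "u \<noteq> v" and "W \<subseteq> V" "finite W" "card W = t" "u \<notin> W" "v \<notin> W"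
    and "\<forall>w\<in>W. \<exists>x. x \<notin> insert u (insert v W) \<and> {u, w, x} \<in> E"
    and "\<forall>w\<in>W. \<exists>y. y \<notin> insert u (insert v W) \<and> {v, w, y} \<in> E"
  shows "contains_trace V E (K2t_vertices t) (K2t_edges t)"
proof -
  obtain h where h: "bij_betw h {0..<t} W"
    using ex_bij_betw_nat_finite[OF \<open>finite W\<close>] \<open>card W = t\<close> by blast
  define \<phi> where "\<phi> = case_sum (\<lambda>i::nat. if i = 0 then u else v) h"
  have VF: "K2t_vertices t = Inl ` {0, 1} \<union> Inr ` {0..<t}"
    by (auto simp: K2t_vertices_def)
  have image: "\<phi> ` K2t_vertices t = insert u (insert v W)"
    using bij_betw_imp_surj_on[OF h] by (auto simp: VF \<phi>_def image_image)
  have "inj_on \<phi> (K2t_vertices t)"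
    unfolding VF inj_on_Un
  proof (intro conjI)
    show "inj_on \<phi> (Inl ` {0, 1})" using \<open>u \<noteq> v\<close> by (auto simp: inj_on_def \<phi>_def)
    show "inj_on \<phi> (Inr ` {0..<t})"
      using bij_betw_imp_inj_on[OF h] by (auto simp: inj_on_def \<phi>_def)
    show "\<phi> ` (Inl ` {0, 1} - Inr ` {0..<t}) \<inter> \<phi> ` (Inr ` {0..<t} - Inl ` {0, 1}) = {}"
      using bij_betw_imp_surj_on[OF h] \<open>u \<notin> W\<close> \<open>v \<notin> W\<close> by (auto simp: \<phi>_def)
  qed
  moreover have "\<phi> ` K2t_vertices t \<subseteq> V" using image assms(1,2,4) by simp
  moreover have "\<forall>e\<in>K2t_edges t. e \<subseteq> K2t_vertices t"
    by (auto simp: K2t_edges_def K2t_vertices_def)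
  moreover have "\<exists>z. z \<notin> \<phi> ` K2t_vertices t \<and> insert z (\<phi> ` e) \<in> E" if e: "e \<in> K2t_edges t" for e
  proof -
    obtain i j where "e = {Inl i, Inr j}" "j < t"
      using e by (auto simp: K2t_edges_def)
    have "h j \<in> W" using bij_betw_apply[OF h] \<open>j < t\<close> by simp
    show ?thesis
    proof (cases "i = 0")
      case True
      obtain x where "x \<notin> insert u (insert v W)" "{u, h j, x} \<in> E"
        using assms(9) \<open>h j \<in> W\<close> by blast
      moreover have "\<phi> ` e = {u, h j}" using \<open>e = {Inl i, Inr j}\<close> True by (simp add: \<phi>_def)
      ultimately show ?thesis unfolding image by (intro exI[of _ x]) (simp add: insert_commute)
    next
      case False
      obtain y where "y \<notin> insert u (insert v W)" "{v, h j, y} \<in> E"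
        using assms(10) \<open>h j \<in> W\<close> by blast
      moreover have "\<phi> ` e = {v, h j}" using \<open>e = {Inl i, Inr j}\<close> False by (simp add: \<phi>_def)
      ultimately show ?thesis unfolding image by (intro exI[of _ y]) (simp add: insert_commute)
    qed
  qed
  ultimately show ?thesis by (intro contains_traceI) auto
qed

section \<open>Vertices joining a pair separately\<close>

lemma card_3_eq_triple:
  assumes "card e = 3" "a \<in> e" "b \<in> e" "c \<in> e" "a \<noteq> b" "a \<noteq> c" "b \<noteq> c"
  shows "e = {a, b, c}"
proof -
  have "finite e" using assms(1) card.infinite by fastforce
  moreover have "{a, b, c} \<subseteq> e" using assms(2-4) by simp
  moreover have "card {a, b, c} = card e" using assms(1,5-7) by simp
  ultimately show ?thesis by (metis card_subset_eq)
qed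

lemma card_3_obtain_third:
  assumes "card e = 3" "a \<in> e" "b \<in> e" "a \<noteq> b"
  obtains c where "e = {a, b, c}" "c \<noteq> a" "c \<noteq> b"
proof -
  have "finite e" using assms(1) card.infinite by fastforce
  then have "card (e - {a, b}) = 1" using assms by (simp add: card_Diff_subset)
  then obtain c where c: "e - {a, b} = {c}" by (rule card_1_singletonE)
  then have "e = {a, b, c}" using assms(2,3) by blast
  moreover have "c \<noteq> a" "c \<noteq> b" using c by auto
  ultimately show ?thesis by (rule that)
qed

definition joins_separately :: "'a set set \<Rightarrow> 'a \<Rightarrow> 'a \<Rightarrow> 'a \<Rightarrow> bool" where
  "joins_separately E u v w \<longleftrightarrow>
     (\<exists>e\<in>E. u \<in> e \<and> w \<in> e \<and> v \<notin> e) \<and> (\<exists>e\<in>E. v \<in> e \<and> w \<in> e \<and> u \<notin> e)"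

lemma joins_separately_distinct:
  "joins_separately E u v w \<Longrightarrow> u \<noteq> v \<and> w \<noteq> u \<and> w \<noteq> v"
  unfolding joins_separately_def by blast

lemma joins_separately_commute: "joins_separately E u v w \<longleftrightarrow> joins_separately E v u w"
  unfolding joins_separately_def by blast

lemma joins_separately_obtain_edge:
  assumes "\<forall>e\<in>E. card e = 3" and "joins_separately E u v w"
  obtains x where "{u, w, x} \<in> E" "v \<notin> {u, w, x}"
proof -
  obtain e where "e \<in> E" "u \<in> e" "w \<in> e" "v \<notin> e"
    using assms(2) by (auto simp: joins_separately_def)
  moreover have "u \<noteq> w" using assms(2) joins_separately_distinct by metis
  ultimately obtain x where "e = {u, w, x}" using assms(1) card_3_obtain_third by metis
  then show ?thesis using that \<open>e \<in> E\<close> \<open>v \<notin> e\<close> by blast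
qed

text \<open>A third of the vertices joining u and v separately have partners outside this third on
  both sides; t of them would form a trace of K_{2,t} with centres u and v.\<close>

lemma card_joins_separately_le:
  assumes "uniform3 n E" and "\<not> contains_trace {0..<n} E (K2t_vertices t) (K2t_edges t)"
  shows "card {w\<in>{0..<n}. joins_separately E u v w} \<le> 3 * t - 3"
proof (rule ccontr)
  define C where "C = {w\<in>{0..<n}. joins_separately E u v w}"
  assume "\<not> ?thesis"
  then have large: "3 * t - 3 < card C" by (simp add: C_def)
  then obtain w0 where "w0 \<in> C" by fastforce
  then have "u \<noteq> v" by (auto simp: C_def dest: joins_separately_distinct)
  have edge: "card e = 3" "e \<subseteq> {0..<n}" if "e \<in> E" for e
    using assms(1) that by (auto simp: uniform3_def)
  then have card3: "\<forall>e\<in>E. card e = 3" by blast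
  define R where "R z z' w x \<longleftrightarrow> {z, w, x} \<in> E \<and> z' \<notin> {z, w, x}" for z z' w x
  have sym: "symp (R z z')" for z z' by (auto intro!: sympI simp: R_def insert_commute)
  have "{z, a, a} \<notin> E" for z a
    using edge(1)[of "{z, a, a}"] by (auto simp: card_insert_if split: if_splits)
  then have irrefl: "irreflp (R z z')" for z z' by (auto intro!: irreflpI simp: R_def)
  have edge_R: "\<exists>x. R z z' w x" if "joins_separately E z z' w" for z z' w
    using joins_separately_obtain_edge[OF card3 that] unfolding R_def by metis
  have "\<forall>c\<in>C. \<exists>x. R u v c x" using edge_R by (simp add: C_def)
  moreover have "\<forall>c\<in>C. \<exists>x. R v u c x"
    using edge_R by (simp add: C_def joins_separately_commute[of E u v])
  moreover have "finite C" by (simp add: C_def)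
  ultimately obtain W0 where W0: "W0 \<subseteq> C" "card C \<le> 3 * card W0"
    "\<forall>w\<in>W0. \<exists>x. R u v w x \<and> x \<notin> W0" "\<forall>w\<in>W0. \<exists>x. R v u w x \<and> x \<notin> W0"
    using large_subset_with_outside_neighbours[of C "R u v" "R v u"] sym irrefl by blast
  have "t \<le> card W0" using large W0(2) by linarith
  then obtain W where W: "W \<subseteq> W0" "card W = t" "finite W" by (rule obtain_subset_with_card_n)
  have "u \<in> {0..<n}" "v \<in> {0..<n}"
    using edge_R[of u v w0] edge_R[of v u w0] edge(2) \<open>w0 \<in> C\<close> joins_separately_commute
    by (fastforce simp: C_def R_def)+
  have "W \<subseteq> C" using W(1) W0(1) by simp
  then have "u \<notin> W" "v \<notin> W" "W \<subseteq> {0..<n}"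
    by (auto simp: C_def dest: joins_separately_distinct)
  have partners: "\<forall>w\<in>W. \<exists>x. x \<notin> insert z (insert z' W) \<and> {z, w, x} \<in> E"
    if outside: "\<forall>w\<in>W0. \<exists>x. R z z' w x \<and> x \<notin> W0" for z z'
  proof
    fix w assume "w \<in> W"
    then obtain x where "{z, w, x} \<in> E" "z' \<notin> {z, w, x}" "x \<notin> W0"
      using outside W(1) unfolding R_def by blast
    moreover have "x \<noteq> z"
      using edge(1)[OF \<open>{z, w, x} \<in> E\<close>] by (auto simp: card_insert_if split: if_splits)
    ultimately show "\<exists>x. x \<notin> insert z (insert z' W) \<and> {z, w, x} \<in> E" using W(1) by blast
  qed
  have "contains_trace {0..<n} E (K2t_vertices t) (K2t_edges t)"
    using partners[OF W0(3)] partners[OF W0(4), unfolded insert_commute[of v u]]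
    by (rule contains_K2t_traceI[OF \<open>u \<in> _\<close> \<open>v \<in> _\<close> \<open>u \<noteq> v\<close> \<open>W \<subseteq> {0..<n}\<close> W(3,2)
          \<open>u \<notin> W\<close> \<open>v \<notin> W\<close>])
  with assms(2) show False ..
qed

section \<open>Degrees in the 2-shadow\<close>

definition shadow_adj :: "'a set set \<Rightarrow> 'a \<Rightarrow> 'a \<Rightarrow> bool" where
  "shadow_adj E u w \<longleftrightarrow> u \<noteq> w \<and> (\<exists>e\<in>E. u \<in> e \<and> w \<in> e)"

definition shadow_nbhd :: "nat set set \<Rightarrow> nat \<Rightarrow> nat \<Rightarrow> nat set" where
  "shadow_nbhd E n w = {u\<in>{0..<n}. shadow_adj E u w}"

text \<open>If w does not join a and b separately, then every hyperedge through a and w contains b,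
  or vice versa; in the first case b is the third vertex of such a hyperedge, so determined by a.\<close>

lemma card_not_joins_separately_le:
  assumes "\<forall>e\<in>E. card e = 3" and "finite N" and "\<forall>a\<in>N. shadow_adj E a w"
  shows "card {p\<in>N \<times> N. fst p \<noteq> snd p \<and> \<not> joins_separately E (fst p) (snd p) w} \<le> 2 * card N"
proof -
  define B where "B = {p\<in>N \<times> N. fst p \<noteq> snd p \<and> (\<forall>e\<in>E. fst p \<in> e \<and> w \<in> e \<longrightarrow> snd p \<in> e)}"
  have "B \<subseteq> N \<times> N" unfolding B_def by (rule Collect_restrict)
  then have "finite B" using assms(2) by (simp add: finite_subset)
  have "inj_on fst B"
  proof (rule inj_onI)
    fix p q assume "p \<in> B" "q \<in> B" "fst p = fst q"
    then obtain a b b' where p: "p = (a, b)" and q: "q = (a, b')" by (metis prod.collapse)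
    have "a \<in> N" "b \<in> N" "b' \<in> N" "a \<noteq> b" "a \<noteq> b'"
      using \<open>p \<in> B\<close> \<open>q \<in> B\<close> by (auto simp: B_def p q)
    then have "b \<noteq> w" "b' \<noteq> w" using assms(3) by (auto simp: shadow_adj_def)
    obtain e where "e \<in> E" "a \<in> e" "w \<in> e" "a \<noteq> w"
      using assms(3) \<open>a \<in> N\<close> by (auto simp: shadow_adj_def)
    then have "b \<in> e" "b' \<in> e" using \<open>p \<in> B\<close> \<open>q \<in> B\<close> by (auto simp: B_def p q)
    have "e = {a, w, b}"
      using card_3_eq_triple assms(1) \<open>e \<in> E\<close> \<open>a \<in> e\<close> \<open>w \<in> e\<close> \<open>b \<in> e\<close> \<open>a \<noteq> w\<close> \<open>a \<noteq> b\<close>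
        \<open>b \<noteq> w\<close> by metis
    then have "b' = b" using \<open>b' \<in> e\<close> \<open>a \<noteq> b'\<close> \<open>b' \<noteq> w\<close> by auto
    then show "p = q" by (simp add: p q)
  qed
  moreover have "fst ` B \<subseteq> N" using \<open>B \<subseteq> N \<times> N\<close> by force
  ultimately have "card B \<le> card N" using assms(2) by (rule card_inj_on_le)
  have "{p\<in>N \<times> N. fst p \<noteq> snd p \<and> \<not> joins_separately E (fst p) (snd p) w} \<subseteq> B \<union> prod.swap ` B"
  proof
    fix p assume p: "p \<in> {p\<in>N \<times> N. fst p \<noteq> snd p \<and> \<not> joins_separately E (fst p) (snd p) w}"
    obtain a b where "p = (a, b)" by fastforce
    with p have "(a, b) \<in> B \<or> (b, a) \<in> B" by (auto simp: B_def joins_separately_def)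
    then show "p \<in> B \<union> prod.swap ` B" using \<open>p = (a, b)\<close> by force
  qed
  then have "card {p\<in>N \<times> N. fst p \<noteq> snd p \<and> \<not> joins_separately E (fst p) (snd p) w}
      \<le> card B + card (prod.swap ` B)"
    using card_mono[OF _ \<open>_ \<subseteq> B \<union> prod.swap ` B\<close>] card_Un_le[of B "prod.swap ` B"]
      \<open>finite B\<close> by simp
  also have "\<dots> \<le> 2 * card N" using card_image_le[OF \<open>finite B\<close>, of prod.swap] \<open>card B \<le> card N\<close>
    by simp
  finally show ?thesis .
qed

lemma card_pairs_le_joins_separately:
  assumes "\<forall>e\<in>E. card e = 3" and "finite N" and "\<forall>a\<in>N. shadow_adj E a w"
    and "Q \<subseteq> {p\<in>N \<times> N. fst p \<noteq> snd p}"
  shows "card Q \<le> 2 * card N + card {p\<in>Q. joins_separately E (fst p) (snd p) w}"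
proof -
  let ?bad = "{p\<in>N \<times> N. fst p \<noteq> snd p \<and> \<not> joins_separately E (fst p) (snd p) w}"
  have "Q \<subseteq> {p\<in>Q. joins_separately E (fst p) (snd p) w} \<union> ?bad" using assms(4) by auto
  moreover have "finite Q" using assms(2,4) finite_subset[of Q "N \<times> N"] by auto
  ultimately have "card Q \<le> card ({p\<in>Q. joins_separately E (fst p) (snd p) w} \<union> ?bad)"
    using assms(2) by (intro card_mono) auto
  also have "\<dots> \<le> card {p\<in>Q. joins_separately E (fst p) (snd p) w} + card ?bad"
    by (rule card_Un_le)
  finally show ?thesis using card_not_joins_separately_le[OF assms(1-3)] by linarith
qed

lemma sum_card_joins_separately_le:
  assumes "uniform3 n E" and "\<not> contains_trace {0..<n} E (K2t_vertices t) (K2t_edges t)"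
    and "finite A"
  shows "(\<Sum>w\<in>{0..<n}. card {p\<in>A. joins_separately E (fst p) (snd p) w}) \<le> (3 * t - 3) * card A"
proof -
  have "(\<Sum>w\<in>{0..<n}. card {p\<in>A. joins_separately E (fst p) (snd p) w})
      = (\<Sum>p\<in>A. card {w\<in>{0..<n}. joins_separately E (fst p) (snd p) w})"
    using \<open>finite A\<close> by (intro sum_multicount_gen) auto
  also have "\<dots> \<le> (\<Sum>p\<in>A. 3 * t - 3)"
    by (intro sum_mono card_joins_separately_le[OF assms(1,2)])
  finally show ?thesis by (simp add: mult.commute)
qed

lemma sum_shadow_degree_squares_le:
  assumes "uniform3 n E" and "\<not> contains_trace {0..<n} E (K2t_vertices t) (K2t_edges t)"
  shows "(\<Sum>w\<in>{0..<n}. card (shadow_nbhd E n w) ^ 2)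
    \<le> 3 * (\<Sum>w\<in>{0..<n}. card (shadow_nbhd E n w)) + (3 * t - 3) * n ^ 2"
proof -
  define P where "P = {0..<n} \<times> {0..<n}"
  have square_le: "card (shadow_nbhd E n w) ^ 2
      \<le> 3 * card (shadow_nbhd E n w) + card {p\<in>P. joins_separately E (fst p) (snd p) w}" for w
  proof -
    define N where "N = shadow_nbhd E n w"
    define Q where "Q = {p\<in>N \<times> N. fst p \<noteq> snd p}"
    have "finite N" by (simp add: N_def shadow_nbhd_def)
    have "card N ^ 2 = card (N \<times> N)" by (simp add: power2_eq_square card_cartesian_product)
    also have "N \<times> N = Q \<union> (\<lambda>x. (x, x)) ` N" by (auto simp: Q_def)
    also have "card \<dots> \<le> card Q + card N"
      using card_Un_le card_image_le[OF \<open>finite N\<close>, of "\<lambda>x. (x, x)"] by (metis add_le_mono le_refl le_trans)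
    also have "card Q \<le> 2 * card N + card {p\<in>Q. joins_separately E (fst p) (snd p) w}"
      using assms(1) \<open>finite N\<close> by (intro card_pairs_le_joins_separately)
        (auto simp: uniform3_def N_def shadow_nbhd_def Q_def)
    also have "card {p\<in>Q. joins_separately E (fst p) (snd p) w}
        \<le> card {p\<in>P. joins_separately E (fst p) (snd p) w}"
      by (rule card_mono) (auto simp: P_def Q_def N_def shadow_nbhd_def)
    finally show ?thesis by (simp add: N_def)
  qed
  have "(\<Sum>w\<in>{0..<n}. card (shadow_nbhd E n w) ^ 2)
      \<le> (\<Sum>w\<in>{0..<n}. 3 * card (shadow_nbhd E n w) + card {p\<in>P. joins_separately E (fst p) (snd p) w})"
    by (rule sum_mono) (rule square_le)
  also have "\<dots> = 3 * (\<Sum>w\<in>{0..<n}. card (shadow_nbhd E n w))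
      + (\<Sum>w\<in>{0..<n}. card {p\<in>P. joins_separately E (fst p) (snd p) w})"
    by (simp add: sum.distrib sum_distrib_left)
  also have "(\<Sum>w\<in>{0..<n}. card {p\<in>P. joins_separately E (fst p) (snd p) w}) \<le> (3 * t - 3) * card P"
    using assms by (intro sum_card_joins_separately_le) (simp_all add: P_def)
  finally show ?thesis by (simp add: P_def card_cartesian_product power2_eq_square)
qed

definition link :: "'a set set \<Rightarrow> 'a \<Rightarrow> ('a \<times> 'a) set" where
  "link E w = {(a, b). a \<noteq> b \<and> a \<noteq> w \<and> b \<noteq> w \<and> {a, b, w} \<in> E}"

definition shadow_arcs :: "nat set set \<Rightarrow> nat \<Rightarrow> (nat \<times> nat) set" where
  "shadow_arcs E n = {p\<in>{0..<n} \<times> {0..<n}. shadow_adj E (fst p) (snd p)}"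

lemma shadow_adj_sym: "shadow_adj E u w \<Longrightarrow> shadow_adj E w u"
  unfolding shadow_adj_def by blast

lemma card_shadow_arcs: "card (shadow_arcs E n) = (\<Sum>w\<in>{0..<n}. card (shadow_nbhd E n w))"
proof -
  have "shadow_arcs E n = Sigma {0..<n} (shadow_nbhd E n)"
    by (auto simp: shadow_arcs_def shadow_nbhd_def intro: shadow_adj_sym)
  then show ?thesis by (simp add: shadow_nbhd_def)
qed

lemma link_eq_UN:
  assumes "\<forall>e\<in>E. card e = 3"
  shows "link E w = (\<Union>e\<in>{e\<in>E. w \<in> e}. {(a, b). a \<noteq> b \<and> a \<in> e - {w} \<and> b \<in> e - {w}})"
proof (intro equalityI subsetI)
  fix p assume "p \<in> link E w"
  then obtain a b where "p = (a, b)" "{a, b, w} \<in> E" "a \<noteq> b" "a \<noteq> w" "b \<noteq> w"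
    by (auto simp: link_def)
  then show "p \<in> (\<Union>e\<in>{e\<in>E. w \<in> e}. {(a, b). a \<noteq> b \<and> a \<in> e - {w} \<and> b \<in> e - {w}})"
    by (intro UN_I[of "{a, b, w}"]) auto
next
  fix p assume "p \<in> (\<Union>e\<in>{e\<in>E. w \<in> e}. {(a, b). a \<noteq> b \<and> a \<in> e - {w} \<and> b \<in> e - {w}})"
  then obtain e a b where "e \<in> E" "w \<in> e" "p = (a, b)" "a \<noteq> b" "a \<in> e - {w}" "b \<in> e - {w}"
    by blast
  moreover from this have "e = {a, b, w}" using assms card_3_eq_triple[of e a b w] by auto
  ultimately show "p \<in> link E w" by (auto simp: link_def)
qed

lemma card_link:
  assumes "\<forall>e\<in>E. card e = 3" and "finite E"
  shows "card (link E w) = 2 * card {e\<in>E. w \<in> e}"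
proof -
  define pairs where "pairs e = {(a, b). a \<noteq> b \<and> a \<in> e - {w} \<and> b \<in> e - {w}}" for e
  have card_pairs: "card (pairs e) = 2" if "e \<in> E" "w \<in> e" for e
  proof -
    have "card (e - {w}) = 2" using assms(1) that by (simp add: card_Diff_singleton_if)
    then obtain a b where "e - {w} = {a, b}" "a \<noteq> b" by (meson card_2_iff)
    then have "pairs e = {(a, b), (b, a)}" by (auto simp: pairs_def)
    then show ?thesis using \<open>a \<noteq> b\<close> by simp
  qed
  have "disjoint_family_on pairs {e\<in>E. w \<in> e}"
    unfolding disjoint_family_on_def
  proof (intro ballI impI)
    fix e e' assume "e \<in> {e\<in>E. w \<in> e}" "e' \<in> {e\<in>E. w \<in> e}" "e \<noteq> e'"
    then have "e = {a, b, w}" "e' = {a, b, w}" if "(a, b) \<in> pairs e" "(a, b) \<in> pairs e'" for a b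
      using that assms(1) card_3_eq_triple[of _ a b w] by (auto simp: pairs_def)
    then show "pairs e \<inter> pairs e' = {}" using \<open>e \<noteq> e'\<close> by fast
  qed
  moreover have "finite (pairs e)" if "e \<in> E" for e
  proof -
    have "finite e" using assms(1) that card.infinite by fastforce
    moreover have "pairs e \<subseteq> e \<times> e" by (auto simp: pairs_def)
    ultimately show ?thesis by (simp add: finite_subset)
  qed
  ultimately have "card (\<Union>e\<in>{e\<in>E. w \<in> e}. pairs e) = (\<Sum>e\<in>{e\<in>E. w \<in> e}. card (pairs e))"
    using assms(2) by (intro card_UN_disjoint') auto
  then show ?thesis using card_pairs link_eq_UN[OF assms(1)] by (simp add: pairs_def)
qed

lemma sum_card_link:
  assumes "uniform3 n E"
  shows "(\<Sum>w\<in>{0..<n}. card (link E w)) = 6 * card E"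
proof -
  have edge: "card e = 3" "e \<subseteq> {0..<n}" if "e \<in> E" for e
    using assms that by (auto simp: uniform3_def)
  have "finite E" using edge(2) by (auto intro: rev_finite_subset[of "Pow {0..<n}"])
  have "(\<Sum>w\<in>{0..<n}. card {e\<in>E. w \<in> e}) = 3 * card E"
  proof (rule sum_multicount)
    show "\<forall>e\<in>E. card {w\<in>{0..<n}. w \<in> e} = 3"
    proof
      fix e assume "e \<in> E"
      then have "{w\<in>{0..<n}. w \<in> e} = e" using edge(2)[OF \<open>e \<in> E\<close>] by auto
      then show "card {w\<in>{0..<n}. w \<in> e} = 3" using edge(1) \<open>e \<in> E\<close> by simp
    qed
  qed (use \<open>finite E\<close> in simp)+
  then show ?thesis using card_link[of E] edge(1) \<open>finite E\<close> by (simp add: sum_distrib_left[symmetric])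
qed

lemma card_link_le:
  assumes "uniform3 n E"
  shows "card (link E w)
    \<le> 2 * card (shadow_nbhd E n w) + card {p\<in>shadow_arcs E n. joins_separately E (fst p) (snd p) w}"
proof -
  have in_edge: "a \<in> {0..<n}" "b \<in> {0..<n}" "shadow_adj E a w" "shadow_adj E b w"
      "shadow_adj E a b" if "(a, b) \<in> link E w" for a b
  proof -
    have "{a, b, w} \<in> E" "a \<noteq> b" "a \<noteq> w" "b \<noteq> w" using that by (auto simp: link_def)
    then show "a \<in> {0..<n}" "b \<in> {0..<n}" "shadow_adj E a w" "shadow_adj E b w" "shadow_adj E a b"
      using assms by (auto simp: uniform3_def shadow_adj_def intro!: bexI[of _ "{a, b, w}"])
  qed
  have "card (link E w) \<le> 2 * card (shadow_nbhd E n w)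
      + card {p\<in>link E w. joins_separately E (fst p) (snd p) w}"
    using assms in_edge by (intro card_pairs_le_joins_separately)
      (auto simp: uniform3_def shadow_nbhd_def link_def)
  also have "card {p\<in>link E w. joins_separately E (fst p) (snd p) w}
      \<le> card {p\<in>shadow_arcs E n. joins_separately E (fst p) (snd p) w}"
    using in_edge by (intro card_mono) (auto simp: shadow_arcs_def)
  finally show ?thesis by simp
qed

lemma six_card_le_sum_shadow_degrees:
  assumes "uniform3 n E" and "\<not> contains_trace {0..<n} E (K2t_vertices t) (K2t_edges t)"
    and "t \<ge> 1"
  shows "6 * card E \<le> (3 * t - 1) * (\<Sum>w\<in>{0..<n}. card (shadow_nbhd E n w))"
proof -
  let ?D = "\<Sum>w\<in>{0..<n}. card (shadow_nbhd E n w)"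
  have "6 * card E = (\<Sum>w\<in>{0..<n}. card (link E w))" using sum_card_link[OF assms(1)] by simp
  also have "\<dots> \<le> (\<Sum>w\<in>{0..<n}. 2 * card (shadow_nbhd E n w)
      + card {p\<in>shadow_arcs E n. joins_separately E (fst p) (snd p) w})"
    by (rule sum_mono) (rule card_link_le[OF assms(1)])
  also have "\<dots> = 2 * ?D + (\<Sum>w\<in>{0..<n}. card {p\<in>shadow_arcs E n. joins_separately E (fst p) (snd p) w})"
    by (simp add: sum.distrib sum_distrib_left)
  also have "\<dots> \<le> 2 * ?D + (3 * t - 3) * card (shadow_arcs E n)"
    using sum_card_joins_separately_le[OF assms(1,2), of "shadow_arcs E n"]
    by (simp add: shadow_arcs_def)
  also have "\<dots> = (3 * t - 1) * ?D" using \<open>t \<ge> 1\<close> by (simp add: card_shadow_arcs algebra_simps)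
  finally show ?thesis .
qed

lemma le_add_sqrt_if_square_le:
  fixes x b c :: real
  assumes "0 \<le> b" "0 \<le> c" "x\<^sup>2 \<le> b * x + c"
  shows "x \<le> b + sqrt c"
proof (rule ccontr)
  assume "\<not> x \<le> b + sqrt c"
  then have lt: "b + sqrt c < x" by simp
  moreover have "0 \<le> b + sqrt c" using assms(1,2) by simp
  ultimately have "0 < x" by linarith
  have "x * (b + sqrt c) < x * x" using lt \<open>0 < x\<close> by (rule mult_strict_left_mono)
  moreover have "sqrt c * sqrt c \<le> x * sqrt c" using lt assms(1,2) by (intro mult_right_mono) auto
  ultimately show False using assms(2,3) by (simp add: power2_eq_square algebra_simps)
qed

lemma leading_constant_le:
  fixes a :: real
  assumes "3 \<le> a"
  shows "(3 * a - 1) / 6 * sqrt (3 * a - 3) \<le> sqrt (3 * (3 * a - 1)) * (a - 1) / 3"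
proof (rule power2_le_imp_le)
  have "(sqrt (3 * (3 * a - 1)) * (a - 1) / 3)\<^sup>2 - ((3 * a - 1) / 6 * sqrt (3 * a - 3))\<^sup>2
      = (3 * a - 1) * (a - 1) * (a - 3) / 12"
    using assms by (simp add: power_mult_distrib power_divide power2_eq_square field_simps)
  moreover have "0 \<le> (3 * a - 1) * (a - 1) * (a - 3)" using assms by simp
  ultimately show "((3 * a - 1) / 6 * sqrt (3 * a - 3))\<^sup>2 \<le> (sqrt (3 * (3 * a - 1)) * (a - 1) / 3)\<^sup>2"
    by linarith
  show "0 \<le> sqrt (3 * (3 * a - 1)) * (a - 1) / 3" using assms by simp
qed

lemma ex3_trace_obtain:
  assumes "EF \<noteq> {}"
  obtains E where "uniform3 n E" "\<not> contains_trace {0..<n} E VF EF" "ex3_trace n VF EF = card E"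
proof -
  define S where "S = {card E | E. uniform3 n E \<and> \<not> contains_trace {0..<n} E VF EF}"
  have "S \<subseteq> card ` Pow (Pow {0..<n})" by (auto simp: S_def uniform3_def)
  then have "finite S" by (rule finite_subset) simp
  have "\<not> contains_trace {0..<n} {} VF EF" using assms by (auto simp: contains_trace_def)
  moreover have "uniform3 n {}" by (simp add: uniform3_def)
  ultimately have "card ({} :: nat set set) \<in> S" unfolding S_def by blast
  with \<open>finite S\<close> have "Max S \<in> S" by (intro Max_in) auto
  then obtain E where "uniform3 n E" "\<not> contains_trace {0..<n} E VF EF" "Max S = card E"
    unfolding S_def by blast
  then show ?thesis using that by (simp add: ex3_trace_def S_def)
qed

lemma card_le_if_no_K2t_trace:
  assumes "uniform3 n E" and "\<not> contains_trace {0..<n} E (K2t_vertices t) (K2t_edges t)"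
    and "t \<ge> 1"
  shows "real (card E)
    \<le> (3 * real t - 1) / 6 * (sqrt (3 * real t - 3) * real n powr (3/2) + 3 * real n)"
proof -
  define d where "d w = real (card (shadow_nbhd E n w))" for w
  define D where "D = (\<Sum>w\<in>{0..<n}. d w)"
  have K: "real (3 * t - 3) = 3 * real t - 3" "real (3 * t - 1) = 3 * real t - 1"
    using \<open>t \<ge> 1\<close> by (simp_all add: of_nat_diff)
  have "real (\<Sum>w\<in>{0..<n}. card (shadow_nbhd E n w) ^ 2)
      \<le> real (3 * (\<Sum>w\<in>{0..<n}. card (shadow_nbhd E n w)) + (3 * t - 3) * n ^ 2)"
    using sum_shadow_degree_squares_le[OF assms(1,2)] by (simp only: of_nat_le_iff)
  then have squares: "(\<Sum>w\<in>{0..<n}. (d w)\<^sup>2) \<le> 3 * D + (3 * real t - 3) * real n ^ 2"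
    by (simp add: d_def D_def K)
  have "D\<^sup>2 \<le> (\<Sum>w\<in>{0..<n}. (d w)\<^sup>2) * real n"
    using sum_squared_le_sum_of_squares[of d "{0..<n}"] by (simp add: D_def)
  also have "\<dots> \<le> (3 * D + (3 * real t - 3) * real n ^ 2) * real n"
    using squares by (rule mult_right_mono) simp
  finally have "D\<^sup>2 \<le> 3 * real n * D + (3 * real t - 3) * real n ^ 3"
    by (simp add: algebra_simps power2_eq_square power3_eq_cube)
  then have "D \<le> 3 * real n + sqrt ((3 * real t - 3) * real n ^ 3)"
    using \<open>t \<ge> 1\<close> by (intro le_add_sqrt_if_square_le) simp_all
  also have "sqrt ((3 * real t - 3) * real n ^ 3) = sqrt (3 * real t - 3) * real n powr (3/2)"
    by (simp add: real_sqrt_mult powr_half_sqrt_powr)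
  finally have D_le: "D \<le> sqrt (3 * real t - 3) * real n powr (3/2) + 3 * real n" by simp
  have "real (6 * card E) \<le> real ((3 * t - 1) * (\<Sum>w\<in>{0..<n}. card (shadow_nbhd E n w)))"
    using six_card_le_sum_shadow_degrees[OF assms] by (simp only: of_nat_le_iff)
  then have "6 * real (card E) \<le> (3 * real t - 1) * D"
    unfolding D_def d_def by (simp only: of_nat_mult of_nat_sum K(2))
  also have "\<dots> \<le> (3 * real t - 1) * (sqrt (3 * real t - 3) * real n powr (3/2) + 3 * real n)"
    using D_le \<open>t \<ge> 1\<close> by (intro mult_left_mono) simp_all
  finally show ?thesis by simp
qed

lemma ex3_trace_K2t_le:
  assumes "t \<ge> 1"
  shows "real (ex3_trace n (K2t_vertices t) (K2t_edges t))
    \<le> (3 * real t - 1) / 6 * sqrt (3 * real t - 3) * real n powr (3/2) + (3 * real t - 1) / 2 * real n"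
proof -
  have "{Inl 0, Inr 0} \<in> K2t_edges t"
    unfolding K2t_edges_def using assms by (intro CollectI exI[of _ 0] conjI) auto
  then obtain E where E: "uniform3 n E" "\<not> contains_trace {0..<n} E (K2t_vertices t) (K2t_edges t)"
    "ex3_trace n (K2t_vertices t) (K2t_edges t) = card E"
    using ex3_trace_obtain[of "K2t_edges t"] by blast
  show ?thesis using card_le_if_no_K2t_trace[OF E(1,2) assms] E(3) by (simp add: field_simps)
qed

theorem mainTheorem4:
  fixes t :: nat
  assumes "t \<ge> 3"
  shows "\<forall>\<epsilon>>0. \<forall>\<^sub>F n in sequentially.
           real (ex3_trace n (K2t_vertices t) (K2t_edges t))
             \<le> (sqrt (3 * (3 * real t - 1)) * (real t - 1) / 3 + sqrt (real t - 1) / 2 + \<epsilon>)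
                * real n powr (3/2)"
proof (intro allI impI)
  fix \<epsilon> :: real assume "\<epsilon> > 0"
  let ?c = "sqrt (3 * (3 * real t - 1)) * (real t - 1) / 3 + sqrt (real t - 1) / 2"
  have "1 \<le> t" "3 \<le> real t" "0 \<le> sqrt (real t - 1)" using assms by simp_all
  then have "(3 * real t - 1) / 6 * sqrt (3 * real t - 3) \<le> ?c"
    using leading_constant_le[OF \<open>3 \<le> real t\<close>] by linarith
  then have main_term: "(3 * real t - 1) / 6 * sqrt (3 * real t - 3) * real n powr (3/2)
      \<le> ?c * real n powr (3/2)" for n
    by (rule mult_right_mono) simp
  have "(\<lambda>n. (3 * real t - 1) / 2 * real n) \<in> o(\<lambda>n. real n powr (3/2))" by real_asymp
  from landau_o.smallD[OF this \<open>\<epsilon> > 0\<close>]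
  have "\<forall>\<^sub>F n in sequentially. (3 * real t - 1) / 2 * real n \<le> \<epsilon> * real n powr (3/2)"
    by eventually_elim (use assms in auto)
  then show "\<forall>\<^sub>F n in sequentially. real (ex3_trace n (K2t_vertices t) (K2t_edges t))
      \<le> (?c + \<epsilon>) * real n powr (3/2)"
  proof eventually_elim
    case (elim n)
    then show ?case
      using ex3_trace_K2t_le[OF \<open>1 \<le> t\<close>, of n] main_term[of n]
      unfolding distrib_right by linarith
  qed
qed

end
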